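(* Fix $\hat p:\mathcal{X}\to[0,1]$ and $\delta\ge0$. Let $(X_i,Y_i)$, $i=1,\dots,n$, be i.i.d. with $Y\in\{0,1\}$, $\Pr(Y=1\mid X)=p_0(X)$, and suppose the two-sided null $\Pr(|\hat p(X)-p_0(X)|>\delta)=0$ holds. Use observations $1,\dots,n_1$ as a training partition to fit a finite collection of bounded residual models $\hat g_{\lambda,n}:\mathcal{X}\to\mathbb{R}$, $\lambda\in\Lambda$, and for $\gamma\ge0$ let $\hat h_{\lambda,\gamma,n}(x)=\hat g_{\lambda,n}(x)\mathbb{1}\{|\hat g_{\lambda,n}(x)|\ge\gamma\}$. Define the test statistic $$\hat T^{(split)}_n=\max_{\lambda\in\Lambda,\gamma\ge0}\sum_{i=n_1+1}^n\big(Y_i-\hat p_{\delta\,\mathrm{sign}(\hat h_{\lambda,\gamma,n}(X_i))}(X_i)\big)\hat h_{\lambda,\gamma,n}(X_i).$$ Conditionally on the training partition and on $X_{n_1+1},\dots,X_n$, let $U_i$ be i.i.d. standard uniform random variables and define, for each $\lambda$, $Y^*_{i,\lambda}=\mathbb{1}\{U_i\le\hat p(X_i)+\delta\,\mathrm{sign}(\hat g_{\lambda,n}(X_i))\}$ (the same $U_i$ used for all $\lambda$). Let $T^{*(split)}$ be defined as $\hat T^{(split)}_n$ but with $Y_i$ replaced by $Y^*_{i,\lambda}$ in the term indexed by $\lambda$, and let $\tau_\alpha$ be the conditional $1-\alpha$ quantile of $T^{*(split)}$. Then the test rejecting when $\hat T^{(split)}_n>\tau_\alpha$ has Type I error at most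 $\alpha$ in finite samples.
   Context: For $c\in\mathbb{R}$, $\hat p_{c}(x)=[\hat p(x)+c]_{[0,1]}$, where $[q]_{[0,1]}$ denotes clipping of $q$ to $[0,1]$; $\mathrm{sign}(t)\in\{-1,0,1\}$ is the sign of $t$, with $\mathrm{sign}(0)=0$. The $1-\alpha$ quantile of $T$ is $\inf\{t:\Pr(T\le t)\ge1-\alpha\}$. *)

theory Defs
  imports "HOL-Probability.Probability"
begin

definition clip01 :: "real \<Rightarrow> real" where
  "clip01 q = max 0 (min 1 q)"

definition phat_shift :: "('x \<Rightarrow> real) \<Rightarrow> real \<Rightarrow> 'x \<Rightarrow> real" where
  "phat_shift ph c x = clip01 (ph x + c)"

definition thresh :: "('x \<Rightarrow> real) \<Rightarrow> real \<Rightarrow> 'x \<Rightarrow> real" where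
  "thresh g \<gamma> x = g x * (if \<bar>g x\<bar> \<ge> \<gamma> then 1 else 0)"

text \<open>Split statistic: maximum over lambda in Lambda and gamma >= 0 of the sum over the
  test indices n1+1..n; the responses y may depend on lambda (needed for the bootstrap).\<close>
definition split_stat ::
  "('x \<Rightarrow> real) \<Rightarrow> real \<Rightarrow> 'l set \<Rightarrow> ('l \<Rightarrow> 'x \<Rightarrow> real) \<Rightarrow> nat \<Rightarrow> nat
     \<Rightarrow> (nat \<Rightarrow> 'x) \<Rightarrow> ('l \<Rightarrow> nat \<Rightarrow> real) \<Rightarrow> real" where
  "split_stat ph \<delta> \<Lambda> g n1 n x y =
     Max ((\<lambda>(l, \<gamma>). \<Sum>i\<in>{n1<..n}.
             (y l i - phat_shift ph (\<delta> * sgn (thresh (g l) \<gamma> (x i))) (x i)) * thresh (g l) \<gamma> (x i))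
          ` (\<Lambda> \<times> {0..}))"

definition boot_response ::
  "('x \<Rightarrow> real) \<Rightarrow> real \<Rightarrow> ('l \<Rightarrow> 'x \<Rightarrow> real) \<Rightarrow> (nat \<Rightarrow> 'x) \<Rightarrow> (nat \<Rightarrow> real) \<Rightarrow> 'l \<Rightarrow> nat \<Rightarrow> real" where
  "boot_response ph \<delta> g x u l i = (if u i \<le> ph (x i) + \<delta> * sgn (g l (x i)) then 1 else 0)"

definition boot_law :: "nat \<Rightarrow> nat \<Rightarrow> (nat \<Rightarrow> real) measure" where
  "boot_law n1 n = PiM {n1<..n} (\<lambda>_. uniform_measure lborel {0..1})"

definition quantile_upper :: "'u measure \<Rightarrow> ('u \<Rightarrow> real) \<Rightarrow> real \<Rightarrow> real" where
  "quantile_upper \<mu> T \<alpha> = Inf {t. measure \<mu> {u \<in> space \<mu>. T u \<le> t} \<ge> 1 - \<alpha>}"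

definition training_data ::
  "nat \<Rightarrow> (nat \<Rightarrow> 'a \<Rightarrow> 'x) \<Rightarrow> (nat \<Rightarrow> 'a \<Rightarrow> real) \<Rightarrow> 'a \<Rightarrow> nat \<Rightarrow> 'x \<times> real" where
  "training_data n1 X Y \<omega> = (\<lambda>i\<in>{1..n1}. (X i \<omega>, Y i \<omega>))"

end

(*
  Under the null, p0 can be replaced by a version q that agrees with it almost surely and lies
  within delta of phat everywhere. A binary response with success probability q(X) has the law of
  1{U <= q(X)} for a uniform U independent of X, so the test sample may be generated from the very
  uniforms U that drive the bootstrap responses 1{U <= phat(X) + delta sign(g(X))}. In every summand
  of the statistic the bootstrap cut-off then lies above q where the thresholded residual is positive
  and below q where it is negative, so given the training data and the test covariates the observed
  statistic is at most T*(U). Rejection beyond the (1 - alpha)-quantile of T* therefore forces T*(U)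
  to have strict rank at least 1 - alpha in its own law, an event of probability at most alpha.
  The maximum over gamma >= 0 is attained among finitely many thresholds, which also yields
  measurability and boundedness of the statistics.
*)

theory Submission
  imports Defs
begin

section \<open>The split statistic as a finite maximum\<close>

definition split_term ::
  "('x \<Rightarrow> real) \<Rightarrow> real \<Rightarrow> ('l \<Rightarrow> 'x \<Rightarrow> real) \<Rightarrow> nat \<Rightarrow> nat \<Rightarrow> (nat \<Rightarrow> 'x)
     \<Rightarrow> ('l \<Rightarrow> nat \<Rightarrow> real) \<Rightarrow> 'l \<Rightarrow> real \<Rightarrow> real" where
  "split_term ph \<delta> g n1 n x y l \<gamma> =
     (\<Sum>i\<in>{n1<..n}. (y l i - phat_shift ph (\<delta> * sgn (thresh (g l) \<gamma> (x i))) (x i)) * thresh (g l) \<gamma> (x i))"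

text \<open>Only finitely many thresholds matter: the values \<open>\<bar>g l (x j)\<bar>\<close> at the test points \<open>j\<close>,
  and one value above all of them (index \<open>0\<close>), which switches every summand off.\<close>
definition threshold_candidate ::
  "('l \<Rightarrow> 'x \<Rightarrow> real) \<Rightarrow> nat \<Rightarrow> nat \<Rightarrow> (nat \<Rightarrow> 'x) \<Rightarrow> 'l \<Rightarrow> nat \<Rightarrow> real" where
  "threshold_candidate g n1 n x l j =
     (if j \<in> {n1<..n} then \<bar>g l (x j)\<bar> else (\<Sum>i\<in>{n1<..n}. \<bar>g l (x i)\<bar>) + 1)"

lemma threshold_candidate_nonneg: "threshold_candidate g n1 n x l j \<ge> 0"
  unfolding threshold_candidate_def by (auto intro: sum_nonneg add_nonneg_nonneg)

lemma split_term_cong_threshold: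
  assumes "\<forall>i\<in>{n1<..n}. (\<gamma> \<le> \<bar>g l (x i)\<bar>) = (\<gamma>' \<le> \<bar>g l (x i)\<bar>)"
  shows "split_term ph \<delta> g n1 n x y l \<gamma> = split_term ph \<delta> g n1 n x y l \<gamma>'"
  unfolding split_term_def thresh_def using assms by (intro sum.cong) auto

lemma threshold_candidate_exists:
  assumes "\<gamma> \<ge> 0"
  obtains j where "j \<in> insert 0 {n1<..n}"
    and "\<forall>i\<in>{n1<..n}. (\<gamma> \<le> \<bar>g l (x i)\<bar>) = (threshold_candidate g n1 n x l j \<le> \<bar>g l (x i)\<bar>)"
proof (cases "\<exists>i\<in>{n1<..n}. \<gamma> \<le> \<bar>g l (x i)\<bar>")
  case False
  have "\<bar>g l (x i)\<bar> < threshold_candidate g n1 n x l 0" if "i \<in> {n1<..n}" for i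
  proof -
    have "\<bar>g l (x i)\<bar> \<le> (\<Sum>i\<in>{n1<..n}. \<bar>g l (x i)\<bar>)"
      using that by (intro member_le_sum) auto
    then show ?thesis unfolding threshold_candidate_def by simp
  qed
  with False show ?thesis by (intro that[of 0]) force+
next
  case True
  define S where "S = {i\<in>{n1<..n}. \<gamma> \<le> \<bar>g l (x i)\<bar>}"
  have "finite S" "S \<noteq> {}" using True unfolding S_def by auto
  then obtain j where j: "j \<in> S" and jmin: "\<forall>i\<in>S. \<bar>g l (x j)\<bar> \<le> \<bar>g l (x i)\<bar>"
    using arg_min_if_finite[of S "\<lambda>i. \<bar>g l (x i)\<bar>"] by (metis not_le)
  then have "j \<in> {n1<..n}" "threshold_candidate g n1 n x l j = \<bar>g l (x j)\<bar>"
    unfolding S_def threshold_candidate_def by auto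
  with j jmin show ?thesis unfolding S_def by (intro that[of j]) force+
qed

lemma split_stat_eq_Max_candidates:
  "split_stat ph \<delta> \<Lambda> g n1 n x y =
     Max ((\<lambda>(l, j). split_term ph \<delta> g n1 n x y l (threshold_candidate g n1 n x l j))
          ` (\<Lambda> \<times> insert 0 {n1<..n}))"
proof -
  have "(\<lambda>(l, \<gamma>). split_term ph \<delta> g n1 n x y l \<gamma>) ` (\<Lambda> \<times> {0..})
      = (\<lambda>(l, j). split_term ph \<delta> g n1 n x y l (threshold_candidate g n1 n x l j))
          ` (\<Lambda> \<times> insert 0 {n1<..n})" (is "?lhs = ?rhs")
  proof
    show "?rhs \<subseteq> ?lhs"
      by (auto intro!: image_eqI threshold_candidate_nonneg)
    show "?lhs \<subseteq> ?rhs"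
    proof
      fix p assume "p \<in> ?lhs"
      then obtain l \<gamma> where l: "l \<in> \<Lambda>" and \<gamma>: "\<gamma> \<ge> 0"
        and p: "p = split_term ph \<delta> g n1 n x y l \<gamma>" by auto
      obtain j where "j \<in> insert 0 {n1<..n}"
        and "\<forall>i\<in>{n1<..n}. (\<gamma> \<le> \<bar>g l (x i)\<bar>) = (threshold_candidate g n1 n x l j \<le> \<bar>g l (x i)\<bar>)"
        using threshold_candidate_exists[OF \<gamma>] .
      with l show "p \<in> ?rhs"
        unfolding p by (auto intro!: image_eqI[where x="(l, j)"] split_term_cong_threshold)
    qed
  qed
  then show ?thesis by (simp add: split_stat_def split_term_def)
qed

lemma split_stat_cong:
  assumes "\<forall>l\<in>\<Lambda>. \<forall>i\<in>{n1<..n}. g l (x i) = g' l (x' i)"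
    and "\<forall>i\<in>{n1<..n}. ph (x i) = ph (x' i)"
    and "\<forall>l\<in>\<Lambda>. \<forall>i\<in>{n1<..n}. y l i = y' l i"
  shows "split_stat ph \<delta> \<Lambda> g n1 n x y = split_stat ph \<delta> \<Lambda> g' n1 n x' y'"
  unfolding split_stat_eq_Max_candidates
proof (intro arg_cong[where f=Max] image_cong refl, clarify)
  fix l j assume l: "l \<in> \<Lambda>"
  have "threshold_candidate g n1 n x l j = threshold_candidate g' n1 n x' l j"
    unfolding threshold_candidate_def using assms(1) l by (auto intro!: sum.cong)
  then show "split_term ph \<delta> g n1 n x y l (threshold_candidate g n1 n x l j) =
             split_term ph \<delta> g' n1 n x' y' l (threshold_candidate g' n1 n x' l j)"
    unfolding split_term_def thresh_def phat_shift_def using assms l by (intro sum.cong) auto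
qed

lemma split_stat_no_test_points:
  assumes "n \<le> n1" "finite \<Lambda>" "\<Lambda> \<noteq> {}"
  shows "split_stat ph \<delta> \<Lambda> g n1 n x y = 0"
  using assms unfolding split_stat_eq_Max_candidates by (simp add: split_term_def)

lemma split_stat_abs_le:
  assumes "finite \<Lambda>" "\<Lambda> \<noteq> {}" and y01: "\<forall>l\<in>\<Lambda>. \<forall>i\<in>{n1<..n}. y l i \<in> {0, 1}"
  shows "\<bar>split_stat ph \<delta> \<Lambda> g n1 n x y\<bar> \<le> (\<Sum>l\<in>\<Lambda>. \<Sum>i\<in>{n1<..n}. \<bar>g l (x i)\<bar>)"
proof -
  let ?f = "\<lambda>(l, j). split_term ph \<delta> g n1 n x y l (threshold_candidate g n1 n x l j)"
  have "Max (?f ` (\<Lambda> \<times> insert 0 {n1<..n})) \<in> ?f ` (\<Lambda> \<times> insert 0 {n1<..n})"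
    using assms(1,2) by (intro Max_in) auto
  then obtain l j where l: "l \<in> \<Lambda>"
    and max: "split_stat ph \<delta> \<Lambda> g n1 n x y = split_term ph \<delta> g n1 n x y l (threshold_candidate g n1 n x l j)"
    unfolding split_stat_eq_Max_candidates by auto
  have "\<bar>(y l i - phat_shift ph c (x i)) * thresh (g l) \<gamma> (x i)\<bar> \<le> \<bar>g l (x i)\<bar>"
    if "i \<in> {n1<..n}" for i c \<gamma>
  proof -
    have "y l i \<in> {0, 1}" using y01 l that by auto
    then have "\<bar>y l i - phat_shift ph c (x i)\<bar> \<le> 1"
      unfolding phat_shift_def clip01_def by auto
    moreover have "\<bar>thresh (g l) \<gamma> (x i)\<bar> \<le> \<bar>g l (x i)\<bar>" unfolding thresh_def by auto
    ultimately show ?thesis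
      unfolding abs_mult using mult_mono[of _ 1 _ "\<bar>g l (x i)\<bar>"] by force
  qed
  then have "\<bar>split_term ph \<delta> g n1 n x y l (threshold_candidate g n1 n x l j)\<bar> \<le> (\<Sum>i\<in>{n1<..n}. \<bar>g l (x i)\<bar>)"
    unfolding split_term_def by (intro order.trans[OF sum_abs] sum_mono) auto
  also have "\<dots> \<le> (\<Sum>l\<in>\<Lambda>. \<Sum>i\<in>{n1<..n}. \<bar>g l (x i)\<bar>)"
    using assms(1) l by (intro member_le_sum) (auto intro: sum_nonneg)
  finally show ?thesis unfolding max .
qed

lemma coupled_summand_le:
  fixes h c v q p \<delta> :: real
  assumes "\<bar>p - q\<bar> \<le> \<delta>" "h = 0 \<or> h = a"
  shows "((if v \<le> q then 1 else 0) - c) * h \<le> ((if v \<le> p + \<delta> * sgn a then 1 else 0) - c) * h"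
  using assms by (cases "a > 0"; cases "a < 0") (auto simp: algebra_simps)

lemma split_stat_le_boot_response:
  assumes "finite \<Lambda>" "\<Lambda> \<noteq> {}" and close: "\<forall>i\<in>{n1<..n}. \<bar>ph (x i) - q (x i)\<bar> \<le> \<delta>"
  shows "split_stat ph \<delta> \<Lambda> g n1 n x (\<lambda>l i. if v i \<le> q (x i) then 1 else 0)
       \<le> split_stat ph \<delta> \<Lambda> g n1 n x (boot_response ph \<delta> g x v)"
proof -
  let ?y = "\<lambda>l i. if v i \<le> q (x i) then 1 else 0" and ?K = "\<Lambda> \<times> insert 0 {n1<..n}"
  let ?term = "\<lambda>y (l, j). split_term ph \<delta> g n1 n x y l (threshold_candidate g n1 n x l j)"
  have "Max (?term ?y ` ?K) \<le> Max (?term (boot_response ph \<delta> g x v) ` ?K)"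
  proof (rule Max.boundedI)
    show "finite (?term ?y ` ?K)" "?term ?y ` ?K \<noteq> {}" using assms(1,2) by auto
    fix s assume "s \<in> ?term ?y ` ?K"
    then obtain l j where s: "s = ?term ?y (l, j)" and lj: "(l, j) \<in> ?K" by auto
    have "?term ?y (l, j) \<le> ?term (boot_response ph \<delta> g x v) (l, j)"
      unfolding split_term_def boot_response_def split
      by (intro sum_mono coupled_summand_le) (use close in \<open>auto simp: thresh_def\<close>)
    also have "\<dots> \<le> Max (?term (boot_response ph \<delta> g x v) ` ?K)"
      using assms(1) lj by (intro Max_ge) auto
    finally show "s \<le> Max (?term (boot_response ph \<delta> g x v) ` ?K)" unfolding s .
  qed
  then show ?thesis unfolding split_stat_eq_Max_candidates .
qed

lemma split_stat_measurable:
  fixes x :: "'w \<Rightarrow> nat \<Rightarrow> 'x" and g :: "'w \<Rightarrow> 'l \<Rightarrow> 'x \<Rightarrow> real" and y :: "'w \<Rightarrow> 'l \<Rightarrow> nat \<Rightarrow> real"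
  assumes "finite \<Lambda>" and ph: "ph \<in> borel_measurable MX"
    and x: "\<And>i. i \<in> {n1<..n} \<Longrightarrow> (\<lambda>w. x w i) \<in> measurable N MX"
    and g: "\<And>l i. l \<in> \<Lambda> \<Longrightarrow> i \<in> {n1<..n} \<Longrightarrow> (\<lambda>w. g w l (x w i)) \<in> borel_measurable N"
    and y: "\<And>l i. l \<in> \<Lambda> \<Longrightarrow> i \<in> {n1<..n} \<Longrightarrow> (\<lambda>w. y w l i) \<in> borel_measurable N"
  shows "(\<lambda>w. split_stat ph \<delta> \<Lambda> (g w) n1 n (x w) (y w)) \<in> borel_measurable N"
  unfolding split_stat_eq_Max_candidates
proof (rule borel_measurable_Max)
  show "finite (\<Lambda> \<times> insert 0 {n1<..n})" using assms(1) by simp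
  fix k assume "k \<in> \<Lambda> \<times> insert 0 {n1<..n}"
  then obtain l j where k: "k = (l, j)" and l: "l \<in> \<Lambda>" by auto
  have [measurable]: "(\<lambda>w. threshold_candidate (g w) n1 n (x w) l j) \<in> borel_measurable N"
    unfolding threshold_candidate_def using g[OF l] by (cases "j \<in> {n1<..n}") auto
  have [measurable]: "(\<lambda>w. ph (x w i)) \<in> borel_measurable N" if "i \<in> {n1<..n}" for i
    using measurable_comp[OF x[OF that] ph] by (simp add: o_def)
  show "(\<lambda>w. case k of (l, j) \<Rightarrow> split_term ph \<delta> (g w) n1 n (x w) (y w) l (threshold_candidate (g w) n1 n (x w) l j))
          \<in> borel_measurable N"
    unfolding k split split_term_def thresh_def phat_shift_def clip01_def
    using g[OF l] y[OF l] by measurable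
qed

section \<open>Quantiles and strict ranks\<close>

lemma (in prob_space) measure_less_ge_of_quantile_upper_less:
  fixes W :: "'a \<Rightarrow> real"
  assumes "\<forall>u\<in>space M. W u \<le> K" and "{u\<in>space M. W u < t} \<in> events"
    and "quantile_upper M W \<alpha> < t" and "0 < \<alpha>"
  shows "1 - \<alpha> \<le> prob {u\<in>space M. W u < t}"
proof -
  define S where "S = {t. prob {u \<in> space M. W u \<le> t} \<ge> 1 - \<alpha>}"
  have "{u \<in> space M. W u \<le> K} = space M" using assms(1) by auto
  then have "K \<in> S" unfolding S_def using assms(4) by (simp add: prob_space)
  moreover have "Inf S < t" using assms(3) unfolding quantile_upper_def S_def by simp
  ultimately obtain s where s: "s \<in> S" "s < t" using cInf_lessD by blast
  have "prob {u \<in> space M. W u \<le> s} \<le> prob {u\<in>space M. W u < t}"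
    using s(2) assms(2) by (intro finite_measure_mono) auto
  with s(1) show ?thesis unfolding S_def by simp
qed

lemma (in prob_space) measure_le_ge_of_measure_less_ge:
  fixes W :: "'a \<Rightarrow> real"
  assumes W: "random_variable borel W" and c: "\<And>t. s < t \<Longrightarrow> c \<le> prob {u\<in>space M. W u < t}"
  shows "c \<le> prob {u\<in>space M. W u \<le> s}"
proof -
  interpret D: real_distribution "distr M borel W" using W by (rule real_distribution_distr)
  have cdf: "cdf (distr M borel W) t = prob {u\<in>space M. W u \<le> t}" for t
    using W by (simp add: cdf_def measure_distr vimage_def Int_def conj_commute)
  have "(cdf (distr M borel W) \<longlongrightarrow> cdf (distr M borel W) s) (at_right s)"
    using D.cdf_is_right_cont[of s] by (simp add: continuous_within)
  moreover have "\<forall>\<^sub>F t in at_right s. c \<le> cdf (distr M borel W) t"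
  proof (rule eventually_mono[OF eventually_at_right_less])
    fix t assume "s < t"
    have "prob {u\<in>space M. W u < t} \<le> prob {u\<in>space M. W u \<le> t}"
      using W by (intro finite_measure_mono) auto
    with c[OF \<open>s < t\<close>] show "c \<le> cdf (distr M borel W) t" unfolding cdf by simp
  qed
  ultimately show ?thesis unfolding cdf[symmetric] by (rule tendsto_lowerbound) simp
qed

text \<open>The superlevel set \<open>{t. c \<le> P(W < t)}\<close> of the strict distribution function is a ray starting at
  its infimum \<open>s\<close>; \<open>T\<close> is \<open>{W < s}\<close> or \<open>{W \<le> s}\<close> according to whether the ray is closed.\<close>
lemma (in prob_space) strict_cdf_superlevel_ray:
  fixes W :: "'a \<Rightarrow> real" and c :: real
  defines "Ks \<equiv> {t. c \<le> prob {u\<in>space M. W u < t}}"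
  assumes W: "random_variable borel W" and "Ks \<noteq> {}" and "bdd_below Ks"
  obtains T where "T \<in> events" and "c \<le> prob T" and "{v\<in>space M. W v \<in> Ks} \<subseteq> space M - T"
proof -
  define s where "s = Inf Ks"
  have Ks_ge: "s \<le> t" if "t \<in> Ks" for t
    unfolding s_def using that \<open>bdd_below Ks\<close> by (rule cInf_lower)
  have Ks_up: "t \<in> Ks" if "t' \<in> Ks" "t' \<le> t" for t t'
  proof -
    have "prob {u\<in>space M. W u < t'} \<le> prob {u\<in>space M. W u < t}"
      using W that(2) by (intro finite_measure_mono) auto
    with that(1) show ?thesis unfolding Ks_def by simp
  qed
  show ?thesis
  proof (cases "s \<in> Ks")
    case True
    show ?thesis
    proof (rule that[of "{u\<in>space M. W u < s}"])
      show "{u\<in>space M. W u < s} \<in> events" using W by measurable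
      show "c \<le> prob {u\<in>space M. W u < s}" using True unfolding Ks_def by simp
      show "{v\<in>space M. W v \<in> Ks} \<subseteq> space M - {u\<in>space M. W u < s}"
        using Ks_ge by (fastforce simp: not_less)
    qed
  next
    case False
    have "c \<le> prob {u\<in>space M. W u \<le> s}"
    proof (rule measure_le_ge_of_measure_less_ge[OF W])
      fix t assume "s < t"
      then obtain t' where "t' \<in> Ks" "t' < t" using cInf_lessD[OF \<open>Ks \<noteq> {}\<close>] unfolding s_def by blast
      then show "c \<le> prob {u\<in>space M. W u < t}" using Ks_up[of t' t] unfolding Ks_def by simp
    qed
    moreover have "{v\<in>space M. W v \<in> Ks} \<subseteq> space M - {u\<in>space M. W u \<le> s}"
      using Ks_ge False by (force simp: order.antisym)
    ultimately show ?thesis using W by (intro that) auto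
  qed
qed

text \<open>No continuity of the law of \<open>W\<close> is needed: the strict rank \<open>P(W < W v)\<close> is not uniform in general.\<close>
lemma (in prob_space) prob_rank_ge_le:
  fixes W :: "'a \<Rightarrow> real"
  assumes W: "random_variable borel W" and bdd: "\<forall>u\<in>space M. K \<le> W u" and "0 \<le> \<alpha>" "\<alpha> < 1"
  shows "prob {v\<in>space M. 1 - \<alpha> \<le> prob {u\<in>space M. W u < W v}} \<le> \<alpha>"
proof -
  define Ks where "Ks = {t. 1 - \<alpha> \<le> prob {u\<in>space M. W u < t}}"
  define E where "E = {v\<in>space M. 1 - \<alpha> \<le> prob {u\<in>space M. W u < W v}}"
  have E_Ks: "E = {v\<in>space M. W v \<in> Ks}" unfolding E_def Ks_def by auto
  show ?thesis
  proof (cases "Ks = {}")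
    case True
    with E_Ks have "E = {}" by auto
    with \<open>0 \<le> \<alpha>\<close> show ?thesis unfolding E_def by (simp only: measure_empty)
  next
    case False
    have "K \<le> t" if "t \<in> Ks" for t
    proof (rule ccontr)
      assume "\<not> K \<le> t"
      then have "{u\<in>space M. W u < t} = {}" using bdd by force
      with that \<open>\<alpha> < 1\<close> show False unfolding Ks_def by simp
    qed
    then have "bdd_below Ks" by (rule bdd_belowI)
    with W False obtain T where T: "T \<in> events" "1 - \<alpha> \<le> prob T" "E \<subseteq> space M - T"
      unfolding E_Ks Ks_def by (rule strict_cdf_superlevel_ray)
    then have "prob E \<le> prob (space M - T)" by (intro finite_measure_mono) auto
    also have "\<dots> \<le> \<alpha>" using T by (simp add: prob_compl)
    finally show ?thesis unfolding E_def .
  qed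
qed

lemma (in prob_space) borel_measurable_rank:
  fixes W :: "'a \<Rightarrow> real"
  assumes W: "random_variable borel W"
  shows "(\<lambda>v. prob {u\<in>space M. W u < W v}) \<in> borel_measurable M"
proof -
  have "mono (\<lambda>t. prob {u\<in>space M. W u < t})"
    using W by (auto intro!: monoI finite_measure_mono)
  from measurable_compose[OF W borel_measurable_mono[OF this]] show ?thesis by simp
qed

section \<open>Binary responses as thresholded uniforms\<close>

lemma Pair_vimage_zip_PiE:
  assumes f: "f \<in> space (PiM I (\<lambda>_. A))" and C: "\<And>i. i \<in> I \<Longrightarrow> C i \<in> sets (A \<Otimes>\<^sub>M B)"
  shows "Pair f -` ((\<lambda>(f, g). \<lambda>i\<in>I. (f i, g i)) -` Pi\<^sub>E I C \<inter> space (PiM I (\<lambda>_. A) \<Otimes>\<^sub>M PiM I (\<lambda>_. B)))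
       = Pi\<^sub>E I (\<lambda>i. Pair (f i) -` C i)"
proof (intro set_eqI iffI)
  fix g assume "g \<in> Pair f -` ((\<lambda>(f, g). \<lambda>i\<in>I. (f i, g i)) -` Pi\<^sub>E I C \<inter> space (PiM I (\<lambda>_. A) \<Otimes>\<^sub>M PiM I (\<lambda>_. B)))"
  then have "g \<in> space (PiM I (\<lambda>_. B))" "(\<lambda>i\<in>I. (f i, g i)) \<in> Pi\<^sub>E I C"
    using f by (auto simp: space_pair_measure)
  then show "g \<in> Pi\<^sub>E I (\<lambda>i. Pair (f i) -` C i)"
    unfolding space_PiM by (auto simp: PiE_iff)
next
  fix g assume g: "g \<in> Pi\<^sub>E I (\<lambda>i. Pair (f i) -` C i)"
  have "g i \<in> space B" if "i \<in> I" for i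
    using g that sets.sets_into_space[OF C[OF that]] by (auto simp: space_pair_measure PiE_iff)
  with g f show "g \<in> Pair f -` ((\<lambda>(f, g). \<lambda>i\<in>I. (f i, g i)) -` Pi\<^sub>E I C \<inter> space (PiM I (\<lambda>_. A) \<Otimes>\<^sub>M PiM I (\<lambda>_. B)))"
    by (auto simp: space_pair_measure space_PiM PiE_iff)
qed

lemma distr_zip_PiM:
  assumes fin: "finite I" and "prob_space A" and "prob_space B"
  shows "distr (PiM I (\<lambda>_. A) \<Otimes>\<^sub>M PiM I (\<lambda>_. B)) (PiM I (\<lambda>_. A \<Otimes>\<^sub>M B)) (\<lambda>(f, g). \<lambda>i\<in>I. (f i, g i))
         = PiM I (\<lambda>_. A \<Otimes>\<^sub>M B)"
    (is "distr ?AB _ ?zip = _")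
proof -
  interpret B: prob_space B by fact
  interpret PA: product_prob_space "\<lambda>_. A" I using assms(2) by (intro product_prob_spaceI)
  interpret PB: product_prob_space "\<lambda>_. B" I using assms(3) by (intro product_prob_spaceI)
  interpret PAB: product_prob_space "\<lambda>_. A \<Otimes>\<^sub>M B" I
    using assms(2,3) by (intro product_prob_spaceI prob_space_pair)
  have zip: "?zip \<in> measurable ?AB (PiM I (\<lambda>_. A \<Otimes>\<^sub>M B))" by measurable
  show ?thesis
  proof (rule PAB.PiM_eqI[OF fin])
    fix C assume C: "\<And>i. i \<in> I \<Longrightarrow> C i \<in> sets (A \<Otimes>\<^sub>M B)"
    then have CE: "Pi\<^sub>E I C \<in> sets (PiM I (\<lambda>_. A \<Otimes>\<^sub>M B))" by (intro sets_PiM_I_finite fin) auto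
    have "emeasure (distr ?AB (PiM I (\<lambda>_. A \<Otimes>\<^sub>M B)) ?zip) (Pi\<^sub>E I C)
        = (\<integral>\<^sup>+f. emeasure (PiM I (\<lambda>_. B)) (Pair f -` (?zip -` Pi\<^sub>E I C \<inter> space ?AB)) \<partial>PiM I (\<lambda>_. A))"
      using zip CE by (simp add: emeasure_distr PB.emeasure_pair_measure_alt measurable_sets)
    also have "\<dots> = (\<integral>\<^sup>+f. (\<Prod>i\<in>I. emeasure B (Pair (f i) -` C i)) \<partial>PiM I (\<lambda>_. A))"
      using C by (intro nn_integral_cong) (simp add: Pair_vimage_zip_PiE PB.emeasure_PiM[OF fin] sets_Pair1 del: vimage_Int)
    also have "\<dots> = (\<Prod>i\<in>I. \<integral>\<^sup>+x. emeasure B (Pair x -` C i) \<partial>A)"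
      using C by (intro PA.product_nn_integral_prod fin B.measurable_emeasure_Pair) auto
    also have "\<dots> = (\<Prod>i\<in>I. emeasure (A \<Otimes>\<^sub>M B) (C i))"
      using C by (intro prod.cong refl B.emeasure_pair_measure_alt[symmetric]) auto
    finally show "emeasure (distr ?AB (PiM I (\<lambda>_. A \<Otimes>\<^sub>M B)) ?zip) (Pi\<^sub>E I C) = (\<Prod>i\<in>I. emeasure (A \<Otimes>\<^sub>M B) (C i))" .
  qed simp
qed

lemma PiM_distr_eq_distr_zip:
  assumes fin: "finite I" and PA: "prob_space A" and PB: "prob_space B"
    and phim: "phi \<in> measurable (A \<Otimes>\<^sub>M B) N"
  shows "PiM I (\<lambda>_. distr (A \<Otimes>\<^sub>M B) N phi)
       = distr (PiM I (\<lambda>_. A) \<Otimes>\<^sub>M PiM I (\<lambda>_. B)) (PiM I (\<lambda>_. N)) (\<lambda>(f,g). \<lambda>i\<in>I. phi (f i, g i))"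
proof -
  define \<nu> where "\<nu> = distr (A \<Otimes>\<^sub>M B) N phi"
  have PAB: "prob_space (A \<Otimes>\<^sub>M B)" by (intro prob_space_pair PA PB)
  have PN: "prob_space \<nu>" unfolding \<nu>_def by (rule prob_space.prob_space_distr[OF PAB phim])
  have sN: "sets \<nu> = sets N" unfolding \<nu>_def by simp
  have phim': "phi \<in> measurable (A \<Otimes>\<^sub>M B) \<nu>" using phim measurable_cong_sets[OF refl sN] by blast
  have nn: "distr (A \<Otimes>\<^sub>M B) \<nu> phi = \<nu>" unfolding \<nu>_def by (intro distr_cong) auto
  have "PiM I (\<lambda>_. \<nu>) = PiM I (\<lambda>_. distr (A \<Otimes>\<^sub>M B) \<nu> phi)" by (simp add: nn)
  also have "\<dots> = distr (PiM I (\<lambda>_. A \<Otimes>\<^sub>M B)) (PiM I (\<lambda>_. \<nu>)) (compose I phi)"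
    using fin PAB phim' PN by (intro distr_PiM_finite_prob_space'[symmetric]) auto
  also have "\<dots> = distr (distr (PiM I (\<lambda>_. A) \<Otimes>\<^sub>M PiM I (\<lambda>_. B)) (PiM I (\<lambda>_. A \<Otimes>\<^sub>M B)) (\<lambda>(f,g). \<lambda>i\<in>I. (f i, g i)))
                  (PiM I (\<lambda>_. \<nu>)) (compose I phi)"
    by (subst distr_zip_PiM[OF fin PA PB]) simp
  also have "\<dots> = distr (PiM I (\<lambda>_. A) \<Otimes>\<^sub>M PiM I (\<lambda>_. B)) (PiM I (\<lambda>_. \<nu>)) (compose I phi \<circ> (\<lambda>(f,g). \<lambda>i\<in>I. (f i, g i)))"
  proof (rule distr_distr)
    show "compose I phi \<in> measurable (PiM I (\<lambda>_. A \<Otimes>\<^sub>M B)) (PiM I (\<lambda>_. \<nu>))"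
      unfolding compose_def using phim' by measurable
    show "(\<lambda>(f,g). \<lambda>i\<in>I. (f i, g i)) \<in> measurable (PiM I (\<lambda>_. A) \<Otimes>\<^sub>M PiM I (\<lambda>_. B)) (PiM I (\<lambda>_. A \<Otimes>\<^sub>M B))"
      by measurable
  qed
  also have "\<dots> = distr (PiM I (\<lambda>_. A) \<Otimes>\<^sub>M PiM I (\<lambda>_. B)) (PiM I (\<lambda>_. N)) (\<lambda>(f,g). \<lambda>i\<in>I. phi (f i, g i))"
    using sN by (intro distr_cong sets_PiM_cong) (auto simp: compose_def)
  finally show ?thesis unfolding \<nu>_def .
qed

abbreviation unif01 :: "real measure" where
  "unif01 \<equiv> uniform_measure lborel {0..1}"

lemma prob_space_unif01: "prob_space unif01"
  by (intro prob_space_uniform_measure) auto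

definition coin_prob :: "real \<Rightarrow> real set \<Rightarrow> real" where
  "coin_prob p b = (if 1 \<in> b then p else 0) + (if 0 \<in> b then 1 - p else 0)"

lemma emeasure_unif01_coin:
  assumes "0 \<le> p" "p \<le> 1"
  shows "emeasure unif01 {u. (if u \<le> p then 1 else 0 :: real) \<in> b} = ennreal (coin_prob p b)"
proof -
  have unif: "emeasure unif01 B = emeasure lborel ({0..1} \<inter> B)" if "B \<in> sets borel" for B
    using that by (subst emeasure_uniform_measure) (auto simp: divide_ennreal_def)
  consider "1 \<in> b" "0 \<in> b" | "1 \<in> b" "0 \<notin> b" | "1 \<notin> b" "0 \<in> b" | "1 \<notin> b" "0 \<notin> b"
    by blast
  then show ?thesis
  proof cases
    case 1
    then have "{u. (if u \<le> p then 1 else 0 :: real) \<in> b} = UNIV" by auto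
    with 1 show ?thesis by (simp add: unif coin_prob_def divide_ennreal_def)
  next
    case 2
    then have "{0..1} \<inter> {u. (if u \<le> p then 1 else 0 :: real) \<in> b} = {0..p}" using assms by auto
    with 2 assms show ?thesis by (simp add: unif coin_prob_def divide_ennreal_def)
  next
    case 3
    then have "{0..1} \<inter> {u. (if u \<le> p then 1 else 0 :: real) \<in> b} = {p<..1}" using assms by auto
    with 3 assms show ?thesis by (simp add: unif coin_prob_def divide_ennreal_def)
  next
    case 4
    then have "{u. (if u \<le> p then 1 else 0 :: real) \<in> b} = {}" by auto
    with 4 show ?thesis by (simp add: coin_prob_def)
  qed
qed

definition coupled_response_law :: "'x measure \<Rightarrow> 'x measure \<Rightarrow> ('x \<Rightarrow> real) \<Rightarrow> ('x \<times> real) measure" where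
  "coupled_response_law MX \<nu>X q =
     distr (\<nu>X \<Otimes>\<^sub>M unif01) (MX \<Otimes>\<^sub>M borel) (\<lambda>(x, u). (x, if u \<le> q x then 1 else 0))"

lemma sets_coupled_response_law [simp]: "sets (coupled_response_law MX \<nu>X q) = sets (MX \<Otimes>\<^sub>M borel)"
  unfolding coupled_response_law_def by simp

lemma prob_space_coupled_response_law:
  assumes "prob_space \<nu>X" "sets \<nu>X = sets MX" "q \<in> borel_measurable MX"
  shows "prob_space (coupled_response_law MX \<nu>X q)"
proof -
  have "(\<lambda>(x, u). (x, if u \<le> q x then 1 else 0 :: real)) \<in> measurable (\<nu>X \<Otimes>\<^sub>M unif01) (MX \<Otimes>\<^sub>M borel)"
    using assms(2,3) by measurable
  then show ?thesis
    unfolding coupled_response_law_def using assms(1) prob_space_unif01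
    by (intro prob_space.prob_space_distr prob_space_pair)
qed

lemma PiM_coupled_response_law:
  assumes "finite I" "prob_space \<nu>X" "sets \<nu>X = sets MX" "q \<in> borel_measurable MX"
  shows "PiM I (\<lambda>_. coupled_response_law MX \<nu>X q)
       = distr (PiM I (\<lambda>_. \<nu>X) \<Otimes>\<^sub>M PiM I (\<lambda>_. unif01)) (PiM I (\<lambda>_. MX \<Otimes>\<^sub>M borel))
           (\<lambda>(x, u). \<lambda>i\<in>I. (x i, if u i \<le> q (x i) then 1 else 0))"
proof -
  have "(\<lambda>(x, u). (x, if u \<le> q x then 1 else 0 :: real)) \<in> measurable (\<nu>X \<Otimes>\<^sub>M unif01) (MX \<Otimes>\<^sub>M borel)"
    using assms(3,4) by measurable
  from PiM_distr_eq_distr_zip[OF assms(1,2) prob_space_unif01 this]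
  show ?thesis unfolding coupled_response_law_def by (simp only: case_prod_conv)
qed

lemma (in prob_space) measure_binary_response_rect:
  fixes X :: "'a \<Rightarrow> 'x" and Y :: "'a \<Rightarrow> real" and q :: "'x \<Rightarrow> real"
  assumes X: "X \<in> measurable M MX" and Y: "Y \<in> borel_measurable M"
    and Y01: "\<forall>\<omega>\<in>space M. Y \<omega> \<in> {0, 1}"
    and q: "q \<in> borel_measurable MX" and q01: "\<forall>x. q x \<in> {0..1}"
    and cp: "\<forall>A\<in>sets MX. prob {\<omega>\<in>space M. X \<omega> \<in> A \<and> Y \<omega> = 1} = (\<integral>\<omega>. indicator A (X \<omega>) * q (X \<omega>) \<partial>M)"
    and a: "a \<in> sets MX"
  shows "prob {\<omega>\<in>space M. X \<omega> \<in> a \<and> Y \<omega> \<in> b} = (\<integral>\<omega>. indicator a (X \<omega>) * coin_prob (q (X \<omega>)) b \<partial>M)"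
proof -
  let ?S = "{\<omega>\<in>space M. X \<omega> \<in> a}" and ?S1 = "{\<omega>\<in>space M. X \<omega> \<in> a \<and> Y \<omega> = 1}"
  have events [measurable]: "?S \<in> events" "?S1 \<in> events" using X Y a by measurable
  have S1: "prob ?S1 = (\<integral>\<omega>. indicator a (X \<omega>) * q (X \<omega>) \<partial>M)" using cp a by auto
  have "(\<integral>\<omega>. indicator a (X \<omega>) \<partial>M) = (\<integral>\<omega>. indicator ?S \<omega> \<partial>M)"
    by (intro Bochner_Integration.integral_cong) (auto simp: indicator_def)
  also have "\<dots> = prob ?S" using events(1) by (simp add: emeasure_finite)
  finally have S: "prob ?S = (\<integral>\<omega>. indicator a (X \<omega>) \<partial>M)" by simp
  have prob_rect: "prob {\<omega>\<in>space M. X \<omega> \<in> a \<and> Y \<omega> \<in> b}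
      = (if 1 \<in> b then prob ?S1 else 0) + (if 0 \<in> b then prob ?S - prob ?S1 else 0)"
  proof -
    have "{\<omega>\<in>space M. X \<omega> \<in> a \<and> Y \<omega> \<in> b}
        = (if 1 \<in> b then ?S1 else {}) \<union> (if 0 \<in> b then ?S - ?S1 else {})"
      using Y01 by auto
    moreover have "prob (?S - ?S1) = prob ?S - prob ?S1"
      using events by (rule finite_measure_Diff) auto
    ultimately show ?thesis by (auto simp: finite_measure_Union)
  qed
  have int_q: "integrable M (\<lambda>\<omega>. indicator a (X \<omega>) * q (X \<omega>) :: real)"
    using X q a q01 by (intro integrable_const_bound[where B=1]) (auto simp: indicator_def)
  have int_a: "integrable M (\<lambda>\<omega>. indicator a (X \<omega>) :: real)"
    using X a by (intro integrable_const_bound[where B=1]) (auto simp: indicator_def)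
  have "(\<lambda>\<omega>. indicator a (X \<omega>) * coin_prob (q (X \<omega>)) b)
      = (\<lambda>\<omega>. (if 1 \<in> b then indicator a (X \<omega>) * q (X \<omega>) else 0)
             + (if 0 \<in> b then indicator a (X \<omega>) - indicator a (X \<omega>) * q (X \<omega>) else 0))"
    by (auto simp: coin_prob_def algebra_simps)
  then show ?thesis
    using int_q int_a unfolding prob_rect S1 S by simp
qed

lemma emeasure_coupled_response_law_rect:
  assumes \<nu>X: "sets \<nu>X = sets MX" and q: "q \<in> borel_measurable MX" and q01: "\<forall>x. q x \<in> {0..1}"
    and a: "a \<in> sets MX" and b: "b \<in> sets borel"
  shows "emeasure (coupled_response_law MX \<nu>X q) (a \<times> b) = (\<integral>\<^sup>+x. ennreal (indicator a x * coin_prob (q x) b) \<partial>\<nu>X)"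
proof -
  interpret U: prob_space unif01 by (rule prob_space_unif01)
  let ?coupled = "\<lambda>(x, u). (x, if u \<le> q x then 1 else 0 :: real)" and ?XU = "\<nu>X \<Otimes>\<^sub>M unif01"
  have coupled: "?coupled \<in> measurable ?XU (MX \<Otimes>\<^sub>M borel)" using q \<nu>X by measurable
  have "emeasure (coupled_response_law MX \<nu>X q) (a \<times> b) = emeasure ?XU (?coupled -` (a \<times> b) \<inter> space ?XU)"
    unfolding coupled_response_law_def using coupled a b by (intro emeasure_distr) auto
  also have "\<dots> = (\<integral>\<^sup>+x. emeasure unif01 (Pair x -` (?coupled -` (a \<times> b) \<inter> space ?XU)) \<partial>\<nu>X)"
    using coupled a b by (intro U.emeasure_pair_measure_alt measurable_sets[OF coupled]) auto
  also have "\<dots> = (\<integral>\<^sup>+x. ennreal (indicator a x * coin_prob (q x) b) \<partial>\<nu>X)"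
  proof (rule nn_integral_cong)
    fix x assume x: "x \<in> space \<nu>X"
    show "emeasure unif01 (Pair x -` (?coupled -` (a \<times> b) \<inter> space ?XU)) = ennreal (indicator a x * coin_prob (q x) b)"
    proof (cases "x \<in> a")
      case True
      with x have "Pair x -` (?coupled -` (a \<times> b) \<inter> space ?XU) = {u. (if u \<le> q x then 1 else 0 :: real) \<in> b}"
        by (auto simp: space_pair_measure)
      with True q01 emeasure_unif01_coin[of "q x" b] show ?thesis by simp
    next
      case False
      then have "Pair x -` (?coupled -` (a \<times> b) \<inter> space ?XU) = {}" by auto
      with False show ?thesis by simp
    qed
  qed
  finally show ?thesis .
qed

lemma (in prob_space) distr_binary_response_eq_coupled:
  fixes X :: "'a \<Rightarrow> 'x" and Y :: "'a \<Rightarrow> real" and q :: "'x \<Rightarrow> real"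
  assumes X: "X \<in> measurable M MX" and Y: "Y \<in> borel_measurable M"
    and Y01: "\<forall>\<omega>\<in>space M. Y \<omega> \<in> {0, 1}"
    and q: "q \<in> borel_measurable MX" and q01: "\<forall>x. q x \<in> {0..1}"
    and cp: "\<forall>A\<in>sets MX. prob {\<omega>\<in>space M. X \<omega> \<in> A \<and> Y \<omega> = 1} = (\<integral>\<omega>. indicator A (X \<omega>) * q (X \<omega>) \<partial>M)"
  shows "distr M (MX \<Otimes>\<^sub>M borel) (\<lambda>\<omega>. (X \<omega>, Y \<omega>)) = coupled_response_law MX (distr M MX X) q"
    (is "?L = ?R")
proof -
  let ?E = "{a \<times> b | a b. a \<in> sets MX \<and> b \<in> sets (borel :: real measure)}"
  let ?\<Omega> = "space MX \<times> (UNIV :: real set)"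
  have XY: "(\<lambda>\<omega>. (X \<omega>, Y \<omega>)) \<in> measurable M (MX \<Otimes>\<^sub>M borel)" using X Y by measurable
  show ?thesis
  proof (rule measure_eqI_generator_eq[where E="?E" and \<Omega>="?\<Omega>" and A="\<lambda>_. ?\<Omega>"])
    show "Int_stable ?E" by (rule Int_stable_pair_measure_generator)
    show "?E \<subseteq> Pow ?\<Omega>" using sets.sets_into_space by fastforce
    show "sets ?L = sigma_sets ?\<Omega> ?E" "sets ?R = sigma_sets ?\<Omega> ?E"
      by (simp_all add: sets_pair_measure)
    have "?\<Omega> \<in> ?E" by (rule CollectI, rule exI[where x="space MX"], rule exI[where x=UNIV]) simp
    then show "range (\<lambda>_. ?\<Omega>) \<subseteq> ?E" "(\<Union>i::nat. ?\<Omega>) = ?\<Omega>" by auto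
    show "emeasure ?L ?\<Omega> \<noteq> \<infinity>" by (simp add: emeasure_distr XY)
  next
    fix C assume "C \<in> ?E"
    then obtain a b where C: "C = a \<times> b" and a: "a \<in> sets MX" and b: "b \<in> sets (borel :: real measure)"
      by auto
    have q01': "0 \<le> q x" "q x \<le> 1" for x using q01 by auto
    have "emeasure ?R (a \<times> b) = (\<integral>\<^sup>+\<omega>. ennreal (indicator a (X \<omega>) * coin_prob (q (X \<omega>)) b) \<partial>M)"
      using X q a b q01 unfolding emeasure_coupled_response_law_rect[OF sets_distr q q01 a b]
      unfolding coin_prob_def by (intro nn_integral_distr) auto
    also have "\<dots> = ennreal (\<integral>\<omega>. indicator a (X \<omega>) * coin_prob (q (X \<omega>)) b \<partial>M)"
      using X q a q01' unfolding coin_prob_def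
      by (intro nn_integral_eq_integral integrable_const_bound[where B=1] AE_I2)
         (auto simp: indicator_def abs_le_iff)
    also have "\<dots> = emeasure ?L (a \<times> b)"
      using measure_binary_response_rect[OF assms a] XY a b
      by (simp add: emeasure_distr emeasure_eq_measure vimage_def Int_def conj_commute)
    finally show "emeasure ?L C = emeasure ?R C" unfolding C by simp
  qed
qed

lemma (in prob_space) distr_iid_eq_PiM:
  assumes indep: "indep_vars (\<lambda>_. N) Z I" and ident: "\<forall>i\<in>I. distr M N (Z i) = distr M N (Z j)"
    and j: "j \<in> I"
  shows "distr M (PiM I (\<lambda>_. N)) (\<lambda>\<omega>. \<lambda>i\<in>I. Z i \<omega>) = PiM I (\<lambda>_. distr M N (Z j))"
proof -
  have "distr M (PiM I (\<lambda>_. N)) (\<lambda>\<omega>. \<lambda>i\<in>I. Z i \<omega>) = PiM I (\<lambda>i. distr M N (Z i))"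
    using indep j by (intro indep_vars_iff_distr_eq_PiM'[THEN iffD1]) (auto simp: indep_vars_def)
  also have "\<dots> = PiM I (\<lambda>_. distr M N (Z j))"
    using ident by (intro PiM_cong) auto
  finally show ?thesis .
qed

text \<open>Under the null, \<open>p0\<close> may be replaced by a version that agrees with it almost surely and is
  within \<open>\<delta>\<close> of \<open>phat\<close> everywhere.\<close>
definition null_proxy :: "('x \<Rightarrow> real) \<Rightarrow> ('x \<Rightarrow> real) \<Rightarrow> real \<Rightarrow> 'x \<Rightarrow> real" where
  "null_proxy phat p0 \<delta> x = (if \<bar>phat x - p0 x\<bar> \<le> \<delta> then p0 x else phat x)"

lemma null_proxy_measurable:
  assumes [measurable]: "phat \<in> borel_measurable MX" "p0 \<in> borel_measurable MX"
  shows "null_proxy phat p0 \<delta> \<in> borel_measurable MX"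
  unfolding null_proxy_def by measurable

lemma null_proxy_close: "\<delta> \<ge> 0 \<Longrightarrow> \<bar>phat x - null_proxy phat p0 \<delta> x\<bar> \<le> \<delta>"
  unfolding null_proxy_def by auto

lemma (in prob_space) distr_binary_response_eq_coupled_null_proxy:
  fixes X :: "'a \<Rightarrow> 'x" and Y :: "'a \<Rightarrow> real"
  assumes X: "X \<in> measurable M MX" and Y: "Y \<in> borel_measurable M"
    and Y01: "\<forall>\<omega>\<in>space M. Y \<omega> \<in> {0, 1}"
    and p0: "p0 \<in> borel_measurable MX" "\<forall>x. p0 x \<in> {0..1}"
    and phat: "phat \<in> borel_measurable MX" "\<forall>x. phat x \<in> {0..1}"
    and cp: "\<forall>A\<in>sets MX. prob {\<omega>\<in>space M. X \<omega> \<in> A \<and> Y \<omega> = 1} = (\<integral>\<omega>. indicator A (X \<omega>) * p0 (X \<omega>) \<partial>M)"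
    and null: "prob {\<omega>\<in>space M. \<bar>phat (X \<omega>) - p0 (X \<omega>)\<bar> > \<delta>} = 0"
  shows "distr M (MX \<Otimes>\<^sub>M borel) (\<lambda>\<omega>. (X \<omega>, Y \<omega>))
       = coupled_response_law MX (distr M MX X) (null_proxy phat p0 \<delta>)"
proof (rule distr_binary_response_eq_coupled[OF X Y Y01])
  let ?q = "null_proxy phat p0 \<delta>"
  show q [measurable]: "?q \<in> borel_measurable MX"
    using phat(1) p0(1) by (rule null_proxy_measurable)
  show "\<forall>x. ?q x \<in> {0..1}" unfolding null_proxy_def using p0(2) phat(2) by auto
  have [measurable]: "{\<omega>\<in>space M. \<bar>phat (X \<omega>) - p0 (X \<omega>)\<bar> > \<delta>} \<in> events"
    using X p0(1) phat(1) by measurable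
  have "AE \<omega> in M. p0 (X \<omega>) = ?q (X \<omega>)"
    using null by (intro AE_I[where N="{\<omega>\<in>space M. \<bar>phat (X \<omega>) - p0 (X \<omega>)\<bar> > \<delta>}"])
      (auto simp: null_proxy_def emeasure_eq_measure)
  then have "(\<integral>\<omega>. indicator A (X \<omega>) * p0 (X \<omega>) \<partial>M) = (\<integral>\<omega>. indicator A (X \<omega>) * ?q (X \<omega>) \<partial>M)"
    if "A \<in> sets MX" for A
    using X p0(1) that by (intro integral_cong_AE) auto
  with cp show "\<forall>A\<in>sets MX. prob {\<omega>\<in>space M. X \<omega> \<in> A \<and> Y \<omega> = 1} = (\<integral>\<omega>. indicator A (X \<omega>) * ?q (X \<omega>) \<partial>M)"
    by simp
qed

lemma (in prob_space) distr_iid_binary_responses_eq_PiM: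
  fixes X :: "nat \<Rightarrow> 'a \<Rightarrow> 'x" and Y :: "nat \<Rightarrow> 'a \<Rightarrow> real"
  assumes indep: "indep_vars (\<lambda>_. MX \<Otimes>\<^sub>M borel) (\<lambda>i \<omega>. (X i \<omega>, Y i \<omega>)) I"
    and ident: "\<forall>i\<in>I. distr M (MX \<Otimes>\<^sub>M borel) (\<lambda>\<omega>. (X i \<omega>, Y i \<omega>))
                    = distr M (MX \<Otimes>\<^sub>M borel) (\<lambda>\<omega>. (X j \<omega>, Y j \<omega>))"
    and j: "j \<in> I" and Y01: "\<forall>\<omega>\<in>space M. Y j \<omega> \<in> {0, 1}"
    and p0: "p0 \<in> borel_measurable MX" "\<forall>x. p0 x \<in> {0..1}"
    and phat: "phat \<in> borel_measurable MX" "\<forall>x. phat x \<in> {0..1}"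
    and cp: "\<forall>A\<in>sets MX. prob {\<omega>\<in>space M. X j \<omega> \<in> A \<and> Y j \<omega> = 1} = (\<integral>\<omega>. indicator A (X j \<omega>) * p0 (X j \<omega>) \<partial>M)"
    and null: "prob {\<omega>\<in>space M. \<bar>phat (X j \<omega>) - p0 (X j \<omega>)\<bar> > \<delta>} = 0"
  shows "distr M (PiM I (\<lambda>_. MX \<Otimes>\<^sub>M borel)) (\<lambda>\<omega>. \<lambda>i\<in>I. (X i \<omega>, Y i \<omega>))
       = PiM I (\<lambda>_. coupled_response_law MX (distr M MX (X j)) (null_proxy phat p0 \<delta>))"
proof -
  have "X j \<in> measurable M MX" "Y j \<in> borel_measurable M"
    using indep j unfolding indep_vars_def by (auto simp: measurable_pair_iff o_def)
  note law_j = distr_binary_response_eq_coupled_null_proxy[OF this Y01 p0 phat cp null]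
  show ?thesis unfolding distr_iid_eq_PiM[OF indep ident j] law_j ..
qed

section \<open>Validity of the split bootstrap test\<close>

lemma prob_space_boot_law: "prob_space (boot_law n1 n)"
  unfolding boot_law_def by (intro prob_space_PiM prob_space_unif01)

lemma (in prob_space) emeasure_pair_measure_le_of_sections:
  assumes "sigma_finite_measure N" and "Q \<in> sets (M \<Otimes>\<^sub>M N)"
    and "\<And>x. x \<in> space M \<Longrightarrow> emeasure N (Pair x -` Q) \<le> c"
  shows "emeasure (M \<Otimes>\<^sub>M N) Q \<le> c"
proof -
  have "emeasure (M \<Otimes>\<^sub>M N) Q = (\<integral>\<^sup>+x. emeasure N (Pair x -` Q) \<partial>M)"
    using assms(1,2) by (rule sigma_finite_measure.emeasure_pair_measure_alt)
  also have "\<dots> \<le> (\<integral>\<^sup>+x. c \<partial>M)" using assms(3) by (intro nn_integral_mono) auto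
  finally show ?thesis by (simp add: emeasure_space_1)
qed

locale split_bootstrap =
  fixes MX :: "'x measure" and phat :: "'x \<Rightarrow> real" and \<delta> :: real
    and \<Lambda> :: "'l set" and g :: "'l \<Rightarrow> (nat \<Rightarrow> 'x \<times> real) \<Rightarrow> 'x \<Rightarrow> real" and n1 n :: nat
  assumes phat_measurable: "phat \<in> borel_measurable MX"
    and n1_le_n: "n1 \<le> n" and finite_\<Lambda>: "finite \<Lambda>" and \<Lambda>_nonempty: "\<Lambda> \<noteq> {}"
    and g_measurable: "\<forall>l\<in>\<Lambda>. (\<lambda>(D, x). g l D x) \<in> borel_measurable (PiM {1..n1} (\<lambda>_. MX \<Otimes>\<^sub>M borel) \<Otimes>\<^sub>M MX)"
begin

abbreviation Data :: "(nat \<Rightarrow> 'x \<times> real) measure" where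
  "Data \<equiv> PiM {1..n} (\<lambda>_. MX \<Otimes>\<^sub>M borel)"

abbreviation Boot :: "(nat \<Rightarrow> real) measure" where
  "Boot \<equiv> boot_law n1 n"

definition obs_stat :: "(nat \<Rightarrow> 'x \<times> real) \<Rightarrow> real" where
  "obs_stat z = split_stat phat \<delta> \<Lambda> (\<lambda>l. g l (restrict z {1..n1})) n1 n (\<lambda>i. fst (z i)) (\<lambda>l i. snd (z i))"

definition boot_stat :: "(nat \<Rightarrow> 'x \<times> real) \<Rightarrow> (nat \<Rightarrow> real) \<Rightarrow> real" where
  "boot_stat z u = split_stat phat \<delta> \<Lambda> (\<lambda>l. g l (restrict z {1..n1})) n1 n (\<lambda>i. fst (z i))
     (boot_response phat \<delta> (\<lambda>l. g l (restrict z {1..n1})) (\<lambda>i. fst (z i)) u)"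

definition rejection_region :: "real \<Rightarrow> (nat \<Rightarrow> 'x \<times> real) set" where
  "rejection_region \<alpha> =
     {z \<in> space Data. 1 - \<alpha> \<le> measure Boot {u \<in> space Boot. boot_stat z u < obs_stat z}}"

lemma measurable_g_training:
  assumes l: "l \<in> \<Lambda>" and i: "i \<in> {1..n}" and f: "f \<in> measurable N Data"
  shows "(\<lambda>p. g l (restrict (f p) {1..n1}) (fst (f p i))) \<in> borel_measurable N"
proof -
  have "(\<lambda>z. (restrict z {1..n1}, fst (z i))) \<in> measurable Data (PiM {1..n1} (\<lambda>_. MX \<Otimes>\<^sub>M borel) \<Otimes>\<^sub>M MX)"
    using n1_le_n i by (intro measurable_Pair measurable_restrict_subset
        measurable_compose[OF measurable_component_singleton[OF i] measurable_fst]) auto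
  from measurable_comp[OF measurable_comp[OF f this] g_measurable[rule_format, OF l]]
  show ?thesis by (simp add: o_def)
qed

lemma obs_stat_measurable: "obs_stat \<in> borel_measurable Data"
  unfolding obs_stat_def
proof (rule split_stat_measurable[OF finite_\<Lambda> phat_measurable])
  fix i assume "i \<in> {n1<..n}"
  then have i: "i \<in> {1..n}" by auto
  then show "(\<lambda>z. fst (z i)) \<in> measurable Data MX" "(\<lambda>z. snd (z i)) \<in> borel_measurable Data"
    by measurable
  show "(\<lambda>z. g l (restrict z {1..n1}) (fst (z i))) \<in> borel_measurable Data" if "l \<in> \<Lambda>" for l
    using measurable_g_training[OF that i measurable_ident_sets[OF refl]] by simp
qed

lemma boot_stat_measurable: "(\<lambda>p. boot_stat (fst p) (snd p)) \<in> borel_measurable (Data \<Otimes>\<^sub>M Boot)"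
  unfolding boot_stat_def
proof (rule split_stat_measurable[OF finite_\<Lambda> phat_measurable])
  fix i assume i': "i \<in> {n1<..n}"
  then have i: "i \<in> {1..n}" by auto
  have [measurable]: "(\<lambda>p. snd p i) \<in> borel_measurable (Data \<Otimes>\<^sub>M Boot)"
    using i' unfolding boot_law_def by measurable
  show x: "(\<lambda>p. fst (fst p i)) \<in> measurable (Data \<Otimes>\<^sub>M Boot) MX" using i by measurable
  fix l assume l: "l \<in> \<Lambda>"
  show g [measurable]: "(\<lambda>p. g l (restrict (fst p) {1..n1}) (fst (fst p i))) \<in> borel_measurable (Data \<Otimes>\<^sub>M Boot)"
    using measurable_g_training[OF l i measurable_fst] .
  have [measurable]: "(\<lambda>p. phat (fst (fst p i))) \<in> borel_measurable (Data \<Otimes>\<^sub>M Boot)"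
    using measurable_comp[OF x phat_measurable] by (simp add: o_def)
  show "(\<lambda>p. boot_response phat \<delta> (\<lambda>l. g l (restrict (fst p) {1..n1})) (\<lambda>i. fst (fst p i)) (snd p) l i)
      \<in> borel_measurable (Data \<Otimes>\<^sub>M Boot)"
    unfolding boot_response_def by measurable
qed

lemma boot_stat_abs_le:
  "\<bar>boot_stat z u\<bar> \<le> (\<Sum>l\<in>\<Lambda>. \<Sum>i\<in>{n1<..n}. \<bar>g l (restrict z {1..n1}) (fst (z i))\<bar>)"
  unfolding boot_stat_def
  by (rule split_stat_abs_le[OF finite_\<Lambda> \<Lambda>_nonempty]) (auto simp: boot_response_def)

lemma rejection_region_sets: "rejection_region \<alpha> \<in> sets Data"
proof -
  interpret B: prob_space Boot by (rule prob_space_boot_law)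
  let ?Q = "{p \<in> space (Data \<Otimes>\<^sub>M Boot). boot_stat (fst p) (snd p) < obs_stat (fst p)}"
  have "?Q \<in> sets (Data \<Otimes>\<^sub>M Boot)"
    using boot_stat_measurable obs_stat_measurable by measurable
  then have "(\<lambda>z. enn2real (emeasure Boot (Pair z -` ?Q))) \<in> borel_measurable Data"
    by (intro borel_measurable_enn2real B.measurable_emeasure_Pair)
  moreover have "enn2real (emeasure Boot (Pair z -` ?Q)) = measure Boot {u \<in> space Boot. boot_stat z u < obs_stat z}"
    if "z \<in> space Data" for z
  proof -
    have "Pair z -` ?Q = {u \<in> space Boot. boot_stat z u < obs_stat z}"
      using that by (auto simp: space_pair_measure)
    then show ?thesis by (simp add: measure_def)
  qed
  ultimately have "(\<lambda>z. measure Boot {u \<in> space Boot. boot_stat z u < obs_stat z}) \<in> borel_measurable Data"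
    by (rule measurable_cong[THEN iffD1, rotated]) simp
  then show ?thesis unfolding rejection_region_def by measurable
qed

lemma rejection_region_eq_empty:
  assumes "n \<le> n1" "\<alpha> < 1"
  shows "rejection_region \<alpha> = {}"
  using assms(2)
  unfolding rejection_region_def obs_stat_def boot_stat_def
  by (simp add: split_stat_no_test_points[OF assms(1) finite_\<Lambda> \<Lambda>_nonempty])

text \<open>Test responses generated from the same uniforms \<open>u\<close> that drive the bootstrap responses.\<close>
definition coupled_data ::
  "('x \<Rightarrow> real) \<Rightarrow> (nat \<Rightarrow> 'x \<times> real) \<Rightarrow> (nat \<Rightarrow> 'x) \<Rightarrow> (nat \<Rightarrow> real) \<Rightarrow> nat \<Rightarrow> 'x \<times> real" where
  "coupled_data q d x u =
     merge {1..n1} {n1<..n} (d, \<lambda>i\<in>{n1<..n}. (x i, if u i \<le> q (x i) then 1 else 0))"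

lemma restrict_coupled_data: "restrict (coupled_data q d x u) {1..n1} = restrict d {1..n1}"
  unfolding coupled_data_def by (auto simp: merge_def restrict_def)

lemma coupled_data_test: "i \<in> {n1<..n} \<Longrightarrow> coupled_data q d x u i = (x i, if u i \<le> q (x i) then 1 else 0)"
  unfolding coupled_data_def by (auto simp: merge_def)

lemma obs_stat_boot_stat_eq_split_stat:
  assumes "restrict z {1..n1} = D" and "\<forall>i\<in>{n1<..n}. z i = (x i, y i)"
  shows "obs_stat z = split_stat phat \<delta> \<Lambda> (\<lambda>l. g l D) n1 n x (\<lambda>l i. y i)"
    and "boot_stat z = (\<lambda>u. split_stat phat \<delta> \<Lambda> (\<lambda>l. g l D) n1 n x
           (boot_response phat \<delta> (\<lambda>l. g l D) x u))"
  using assms unfolding obs_stat_def boot_stat_def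
  by (auto intro!: split_stat_cong simp: boot_response_def)

lemma mem_rejection_region_of_quantile_less:
  assumes z: "z \<in> space Data" and "restrict z {1..n1} = D" and "\<forall>i\<in>{n1<..n}. z i = (x i, y i)"
    and "0 < \<alpha>"
    and reject: "quantile_upper Boot (\<lambda>u. split_stat phat \<delta> \<Lambda> (\<lambda>l. g l D) n1 n x
                   (boot_response phat \<delta> (\<lambda>l. g l D) x u)) \<alpha>
                 < split_stat phat \<delta> \<Lambda> (\<lambda>l. g l D) n1 n x (\<lambda>l i. y i)"
  shows "z \<in> rejection_region \<alpha>"
proof -
  interpret B: prob_space Boot by (rule prob_space_boot_law)
  have "boot_stat z \<in> borel_measurable Boot"
    using measurable_Pair2[OF boot_stat_measurable z] by simp
  moreover note reject[folded obs_stat_boot_stat_eq_split_stat[OF assms(2,3)]]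
  ultimately have "1 - \<alpha> \<le> measure Boot {u \<in> space Boot. boot_stat z u < obs_stat z}"
    using boot_stat_abs_le \<open>0 < \<alpha>\<close>
    by (intro B.measure_less_ge_of_quantile_upper_less) (auto intro: abs_le_D1)
  with z show ?thesis unfolding rejection_region_def by simp
qed

definition boot_stat_given :: "(nat \<Rightarrow> 'x \<times> real) \<Rightarrow> (nat \<Rightarrow> 'x) \<Rightarrow> (nat \<Rightarrow> real) \<Rightarrow> real" where
  "boot_stat_given d x u = split_stat phat \<delta> \<Lambda> (\<lambda>l. g l (restrict d {1..n1})) n1 n x
     (boot_response phat \<delta> (\<lambda>l. g l (restrict d {1..n1})) x u)"

lemma boot_stat_given_measurable:
  assumes x: "\<forall>i\<in>{n1<..n}. x i \<in> space MX"
  shows "boot_stat_given d x \<in> borel_measurable Boot"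
  unfolding boot_stat_given_def
proof (rule split_stat_measurable[OF finite_\<Lambda> phat_measurable])
  fix i l assume i: "i \<in> {n1<..n}"
  then show "(\<lambda>u. x i) \<in> measurable Boot MX" using x by auto
  have "(\<lambda>u. u i) \<in> borel_measurable Boot"
    using i unfolding boot_law_def by measurable
  then show "(\<lambda>u. boot_response phat \<delta> (\<lambda>l. g l (restrict d {1..n1})) x u l i) \<in> borel_measurable Boot"
    unfolding boot_response_def by measurable
qed simp

lemma obs_stat_boot_stat_coupled_data:
  shows "obs_stat (coupled_data q d x u) = split_stat phat \<delta> \<Lambda> (\<lambda>l. g l (restrict d {1..n1})) n1 n x
           (\<lambda>l i. if u i \<le> q (x i) then 1 else 0)"
    and "boot_stat (coupled_data q d x u) = boot_stat_given d x"
  using obs_stat_boot_stat_eq_split_stat[OF restrict_coupled_data,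
      where y="\<lambda>i. if u i \<le> q (x i) then 1 else 0" and x=x]
  by (simp_all add: coupled_data_test boot_stat_given_def fun_eq_iff)

lemma obs_stat_coupled_data_le:
  assumes "\<forall>x. \<bar>phat x - q x\<bar> \<le> \<delta>"
  shows "obs_stat (coupled_data q d x u) \<le> boot_stat_given d x u"
  unfolding obs_stat_boot_stat_coupled_data boot_stat_given_def
  using assms finite_\<Lambda> \<Lambda>_nonempty by (simp add: split_stat_le_boot_response)

text \<open>Rejection forces the bootstrap statistic at the uniforms that generate the responses to have
  high strict rank within its own law.\<close>
lemma prob_coupled_data_rejection_le:
  assumes close: "\<forall>x. \<bar>phat x - q x\<bar> \<le> \<delta>" and x: "\<forall>i\<in>{n1<..n}. x i \<in> space MX"
    and "0 \<le> \<alpha>" "\<alpha> < 1"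
  shows "measure Boot {u \<in> space Boot. coupled_data q d x u \<in> rejection_region \<alpha>} \<le> \<alpha>"
proof -
  interpret B: prob_space Boot by (rule prob_space_boot_law)
  let ?W = "boot_stat_given d x"
  have W: "?W \<in> borel_measurable Boot" using x by (rule boot_stat_given_measurable)
  have "\<bar>?W u\<bar> \<le> (\<Sum>l\<in>\<Lambda>. \<Sum>i\<in>{n1<..n}. \<bar>g l (restrict d {1..n1}) (x i)\<bar>)" for u
    unfolding boot_stat_given_def
    by (rule split_stat_abs_le[OF finite_\<Lambda> \<Lambda>_nonempty]) (auto simp: boot_response_def)
  then have "\<forall>u\<in>space Boot. - (\<Sum>l\<in>\<Lambda>. \<Sum>i\<in>{n1<..n}. \<bar>g l (restrict d {1..n1}) (x i)\<bar>) \<le> ?W u"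
    by (meson abs_le_D2 minus_le_iff)
  with W have "B.prob {v \<in> space Boot. 1 - \<alpha> \<le> B.prob {u \<in> space Boot. ?W u < ?W v}} \<le> \<alpha>"
    using assms(3,4) by (rule B.prob_rank_ge_le)
  moreover have "{u \<in> space Boot. coupled_data q d x u \<in> rejection_region \<alpha>}
      \<subseteq> {v \<in> space Boot. 1 - \<alpha> \<le> B.prob {u \<in> space Boot. ?W u < ?W v}}"
  proof safe
    fix v assume v: "v \<in> space Boot" "coupled_data q d x v \<in> rejection_region \<alpha>"
    have "B.prob {u \<in> space Boot. ?W u < obs_stat (coupled_data q d x v)} \<le> B.prob {u \<in> space Boot. ?W u < ?W v}"
      using obs_stat_coupled_data_le[OF close, of d x v] W by (intro B.finite_measure_mono) auto
    with v show "1 - \<alpha> \<le> B.prob {u \<in> space Boot. ?W u < ?W v}"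
      by (simp add: rejection_region_def obs_stat_boot_stat_coupled_data(2))
  qed
  moreover have "{v \<in> space Boot. 1 - \<alpha> \<le> B.prob {u \<in> space Boot. ?W u < ?W v}} \<in> B.events"
    using B.borel_measurable_rank[OF W] by measurable
  ultimately show ?thesis by (meson B.finite_measure_mono order_trans)
qed

lemma emeasure_test_rejection_le:
  assumes \<nu>X: "prob_space \<nu>X" "sets \<nu>X = sets MX" and q: "q \<in> borel_measurable MX"
    and close: "\<forall>x. \<bar>phat x - q x\<bar> \<le> \<delta>" and \<alpha>: "0 \<le> \<alpha>" "\<alpha> < 1"
    and d: "d \<in> space (PiM {1..n1} (\<lambda>_. MX \<Otimes>\<^sub>M borel))"
  shows "emeasure (PiM {n1<..n} (\<lambda>_. coupled_response_law MX \<nu>X q))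
           {t \<in> space (PiM {n1<..n} (\<lambda>_. MX \<Otimes>\<^sub>M borel)). merge {1..n1} {n1<..n} (d, t) \<in> rejection_region \<alpha>}
         \<le> \<alpha>"
proof -
  interpret X: prob_space "PiM {n1<..n} (\<lambda>_. \<nu>X)" using \<nu>X(1) by (rule prob_space_PiM)
  interpret B: prob_space Boot by (rule prob_space_boot_law)
  let ?Test = "PiM {n1<..n} (\<lambda>_. MX \<Otimes>\<^sub>M borel)" and ?XB = "PiM {n1<..n} (\<lambda>_. \<nu>X) \<Otimes>\<^sub>M Boot"
  let ?S = "{t \<in> space ?Test. merge {1..n1} {n1<..n} (d, t) \<in> rejection_region \<alpha>}"
  let ?Psi = "\<lambda>(x, u). \<lambda>i\<in>{n1<..n}. (x i, if u i \<le> q (x i) then 1 else 0 :: real)"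
  have Psi: "?Psi \<in> measurable ?XB ?Test"
    unfolding boot_law_def using q \<nu>X(2) by measurable
  have tr_te: "{1..n1} \<union> {n1<..n} = {1..n}" using n1_le_n by auto
  have "(\<lambda>t. merge {1..n1} {n1<..n} (d, t)) \<in> measurable ?Test Data"
    using measurable_Pair2[OF measurable_merge[of "{1..n1}" "{n1<..n}"] d] unfolding tr_te .
  then have S: "?S \<in> sets ?Test"
    using rejection_region_sets by (auto dest: measurable_sets simp: vimage_def Int_def conj_commute)
  have "emeasure (PiM {n1<..n} (\<lambda>_. coupled_response_law MX \<nu>X q)) ?S = emeasure ?XB (?Psi -` ?S \<inter> space ?XB)"
    using Psi S \<nu>X(1) q \<nu>X(2) by (simp add: PiM_coupled_response_law boot_law_def emeasure_distr)
  also have "\<dots> \<le> \<alpha>"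
  proof (rule X.emeasure_pair_measure_le_of_sections)
    show "sigma_finite_measure Boot" by (rule B.sigma_finite_measure_axioms)
    show "?Psi -` ?S \<inter> space ?XB \<in> sets ?XB" using Psi S by (rule measurable_sets)
    fix x assume x: "x \<in> space (PiM {n1<..n} (\<lambda>_. \<nu>X))"
    then have x_space: "\<forall>i\<in>{n1<..n}. x i \<in> space MX"
      using sets_eq_imp_space_eq[OF \<nu>X(2)] by (auto simp: space_PiM)
    have "Pair x -` (?Psi -` ?S \<inter> space ?XB) = {u \<in> space Boot. coupled_data q d x u \<in> rejection_region \<alpha>}"
      using x measurable_space[OF Psi] unfolding coupled_data_def by (auto simp: space_pair_measure)
    then show "emeasure Boot (Pair x -` (?Psi -` ?S \<inter> space ?XB)) \<le> \<alpha>"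
      using prob_coupled_data_rejection_le[OF close x_space \<alpha>] by (simp add: B.emeasure_eq_measure ennreal_leI)
  qed
  finally show ?thesis .
qed

lemma measure_rejection_region_le:
  assumes \<nu>X: "prob_space \<nu>X" "sets \<nu>X = sets MX" and q: "q \<in> borel_measurable MX"
    and close: "\<forall>x. \<bar>phat x - q x\<bar> \<le> \<delta>" and \<alpha>: "0 \<le> \<alpha>" "\<alpha> < 1"
  shows "measure (PiM {1..n} (\<lambda>_. coupled_response_law MX \<nu>X q)) (rejection_region \<alpha>) \<le> \<alpha>"
proof -
  let ?\<nu> = "coupled_response_law MX \<nu>X q" and ?R = "rejection_region \<alpha>"
  let ?TrTe = "PiM {1..n1} (\<lambda>_. ?\<nu>) \<Otimes>\<^sub>M PiM {n1<..n} (\<lambda>_. ?\<nu>)"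
  have \<nu>: "prob_space ?\<nu>" and sets_PiM_\<nu>: "sets (PiM I (\<lambda>_. ?\<nu>)) = sets (PiM I (\<lambda>_. MX \<Otimes>\<^sub>M borel))" for I
    using \<nu>X q by (auto intro!: prob_space_coupled_response_law sets_PiM_cong)
  interpret P: product_prob_space "\<lambda>_. ?\<nu>" "{1..n}" using \<nu> by (intro product_prob_spaceI)
  interpret Tr: prob_space "PiM {1..n1} (\<lambda>_. ?\<nu>)" using \<nu> by (rule prob_space_PiM)
  have tr_te: "{1..n1} \<union> {n1<..n} = {1..n}" using n1_le_n by auto
  have R: "?R \<in> sets (PiM ({1..n1} \<union> {n1<..n}) (\<lambda>_. ?\<nu>))"
    unfolding tr_te sets_PiM_\<nu> by (rule rejection_region_sets)
  have "emeasure (PiM {1..n} (\<lambda>_. ?\<nu>)) ?R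
      = emeasure (distr ?TrTe (PiM ({1..n1} \<union> {n1<..n}) (\<lambda>_. ?\<nu>)) (merge {1..n1} {n1<..n})) ?R"
    using P.distr_merge[of "{1..n1}" "{n1<..n}"] tr_te by (simp add: disjoint_iff)
  also have "\<dots> = emeasure ?TrTe (merge {1..n1} {n1<..n} -` ?R \<inter> space ?TrTe)"
    using R by (intro emeasure_distr measurable_merge)
  also have "\<dots> \<le> \<alpha>"
  proof (rule Tr.emeasure_pair_measure_le_of_sections)
    show "sigma_finite_measure (PiM {n1<..n} (\<lambda>_. ?\<nu>))"
      using \<nu> by (intro prob_space_imp_sigma_finite prob_space_PiM)
    show "merge {1..n1} {n1<..n} -` ?R \<inter> space ?TrTe \<in> sets ?TrTe"
      using R by (intro measurable_sets[OF measurable_merge])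
    fix d assume "d \<in> space (PiM {1..n1} (\<lambda>_. ?\<nu>))"
    then show "emeasure (PiM {n1<..n} (\<lambda>_. ?\<nu>)) (Pair d -` (merge {1..n1} {n1<..n} -` ?R \<inter> space ?TrTe)) \<le> \<alpha>"
      using emeasure_test_rejection_le[OF \<nu>X q close \<alpha>]
      by (simp add: space_pair_measure sets_eq_imp_space_eq[OF sets_PiM_\<nu>] vimage_def Int_def conj_commute)
  qed
  finally show ?thesis using \<alpha>(1) by (simp add: measure_def enn2real_leI)
qed

end

theorem theorem4:
  fixes M :: "'a measure" and MX :: "'x measure"
    and X :: "nat \<Rightarrow> 'a \<Rightarrow> 'x" and Y :: "nat \<Rightarrow> 'a \<Rightarrow> real"
    and phat p0 :: "'x \<Rightarrow> real" and \<delta> \<alpha> :: real and n n1 :: nat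
    and \<Lambda> :: "'l set" and g :: "'l \<Rightarrow> (nat \<Rightarrow> 'x \<times> real) \<Rightarrow> 'x \<Rightarrow> real"
  assumes P: "prob_space M"
    and indep: "prob_space.indep_vars M (\<lambda>_. MX \<Otimes>\<^sub>M borel) (\<lambda>i \<omega>. (X i \<omega>, Y i \<omega>)) {1..n}"
    and ident: "\<forall>i\<in>{1..n}. distr M (MX \<Otimes>\<^sub>M borel) (\<lambda>\<omega>. (X i \<omega>, Y i \<omega>))
                          = distr M (MX \<Otimes>\<^sub>M borel) (\<lambda>\<omega>. (X 1 \<omega>, Y 1 \<omega>))"
    and Y01: "\<forall>i\<in>{1..n}. \<forall>\<omega>\<in>space M. Y i \<omega> \<in> {0, 1}"
    and p0_meas: "p0 \<in> borel_measurable MX"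
    and p0_range: "\<forall>x. p0 x \<in> {0..1}"
    and condprob: "\<forall>i\<in>{1..n}. \<forall>A\<in>sets MX.
        measure M {\<omega> \<in> space M. X i \<omega> \<in> A \<and> Y i \<omega> = 1}
          = (\<integral>\<omega>. indicator A (X i \<omega>) * p0 (X i \<omega>) \<partial>M)"
    and phat_meas: "phat \<in> borel_measurable MX"
    and phat_range: "\<forall>x. phat x \<in> {0..1}"
    and delta: "\<delta> \<ge> 0"
    and null: "\<forall>i\<in>{1..n}. measure M {\<omega> \<in> space M. \<bar>phat (X i \<omega>) - p0 (X i \<omega>)\<bar> > \<delta>} = 0"
    and n1n: "n1 \<le> n"
    and Lfin: "finite \<Lambda>" and Lne: "\<Lambda> \<noteq> {}"
    and g_meas: "\<forall>l\<in>\<Lambda>. (\<lambda>(D, x). g l D x)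
                   \<in> borel_measurable (PiM {1..n1} (\<lambda>_. MX \<Otimes>\<^sub>M borel) \<Otimes>\<^sub>M MX)"
    and g_bdd: "\<forall>l\<in>\<Lambda>. \<exists>B. \<forall>D x. \<bar>g l D x\<bar> \<le> B"
    and alpha: "0 < \<alpha>" "\<alpha> < 1"
  shows "\<exists>A\<in>sets M.
     {\<omega> \<in> space M.
        split_stat phat \<delta> \<Lambda> (\<lambda>l. g l (training_data n1 X Y \<omega>)) n1 n (\<lambda>i. X i \<omega>) (\<lambda>l i. Y i \<omega>)
        > quantile_upper (boot_law n1 n)
            (\<lambda>u. split_stat phat \<delta> \<Lambda> (\<lambda>l. g l (training_data n1 X Y \<omega>)) n1 n (\<lambda>i. X i \<omega>)
                    (boot_response phat \<delta> (\<lambda>l. g l (training_data n1 X Y \<omega>)) (\<lambda>i. X i \<omega>) u))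
            \<alpha>}
     \<subseteq> A \<and> measure M A \<le> \<alpha>"
proof -
  interpret prob_space M by (rule P)
  interpret S: split_bootstrap MX phat \<delta> \<Lambda> g n1 n
    using phat_meas n1n Lfin Lne g_meas by unfold_locales
  define data where "data \<omega> = (\<lambda>i\<in>{1..n}. (X i \<omega>, Y i \<omega>))" for \<omega>
  have data: "data \<in> measurable M S.Data"
    using indep unfolding data_def indep_vars_def by (intro measurable_restrict) simp
  let ?A = "data -` S.rejection_region \<alpha> \<inter> space M"
  have measure_A: "measure M ?A \<le> \<alpha>"
    \<comment> \<open>without test points nothing is rejected; otherwise observation 1 exists and carries the common law\<close>
  proof (cases "n1 < n")
    case False
    then show ?thesis using S.rejection_region_eq_empty alpha by simp
  next
    case True
    then have one: "1 \<in> {1..n}" by simp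
    then have X1: "X 1 \<in> measurable M MX"
      using indep unfolding indep_vars_def by (auto simp: measurable_pair_iff o_def)
    have "distr M S.Data data = PiM {1..n} (\<lambda>_. coupled_response_law MX (distr M MX (X 1)) (null_proxy phat p0 \<delta>))"
      unfolding data_def
      by (rule distr_iid_binary_responses_eq_PiM[OF indep ident one bspec[OF Y01 one] p0_meas p0_range
            phat_meas phat_range bspec[OF condprob one] bspec[OF null one]])
    then have "measure M ?A = measure (PiM {1..n} (\<lambda>_. coupled_response_law MX (distr M MX (X 1))
        (null_proxy phat p0 \<delta>))) (S.rejection_region \<alpha>)"
      using measure_distr[OF data S.rejection_region_sets] by simp
    also have "\<dots> \<le> \<alpha>"
      by (rule S.measure_rejection_region_le[OF prob_space_distr[OF X1] sets_distr
            null_proxy_measurable[OF phat_meas p0_meas]]) (use alpha null_proxy_close[OF delta] in auto)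
    finally show ?thesis .
  qed
  have "restrict (data \<omega>) {1..n1} = training_data n1 X Y \<omega>"
    and "\<forall>i\<in>{n1<..n}. data \<omega> i = (X i \<omega>, Y i \<omega>)" for \<omega>
    using n1n by (auto simp: data_def training_data_def)
  note rejects = S.mem_rejection_region_of_quantile_less[OF measurable_space[OF data] this alpha(1)]
  show ?thesis
  proof (intro bexI[of _ ?A] conjI subsetI)
    show "?A \<in> sets M" using data S.rejection_region_sets by (rule measurable_sets)
    show "measure M ?A \<le> \<alpha>" by (fact measure_A)
  qed (elim CollectE conjE, intro IntI vimageI2 rejects; assumption)
qed

end
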